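(* Let $\Omega$ be a region of $\mathcal{C}^*_{n,A}$ and $1\le k\le m$. For $\bm x\in\Omega$ with associated permutation $\pi$, let $M_k(\bm x)$ be the $n\times n$ matrix with entries $\operatorname{sgn}(x_{\pi(i)}-x_{\pi(j)}-a_k)$, $i,j\in[n]$. Then $M_k(\bm x)$ does not depend on the choice of $\bm x\in\Omega$ (even though $\pi$ may).
   Context: Let $A=\{a_1,\dots,a_m\}$ with $a_1>\dots>a_m>0$, and $\mathcal{C}^*_{n,A}$ the arrangement in $\mathbb{R}^n$ of hyperplanes $x_i-x_j=a_k$ ($i\ne j$, $1\le k\le m$); a region is a connected component of the complement of the union of its hyperplanes. For $\bm x\in\mathbb{R}^n$, the associated permutation of $\bm x$ is the unique $\pi\in\mathfrak{S}_n$ with $x_{\pi(1)}\ge x_{\pi(2)}\ge\dots\ge x_{\pi(n)}$ and such that $\pi^{-1}(i)<\pi^{-1}(j)$ whenever $i<j$ and $x_i=x_j$. Here $\operatorname{sgn}$ takes values in $\{-,0,+\}$. *)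

theory Defs
  imports "HOL-Analysis.Analysis"
begin

text \<open>Points of R^n are vectors real^'n, where the finite, linearly ordered index
type 'n plays the role of [n] = {1,...,n} with its usual order.
The parameter set A = {a_1,...,a_m} is given by a :: nat => real on {1..m}.\<close>

definition arr_union :: "(nat \<Rightarrow> real) \<Rightarrow> nat \<Rightarrow> (real ^ 'n) set" where
  "arr_union a m = {x. \<exists>i j k. i \<noteq> j \<and> k \<in> {1..m} \<and> x $ i - x $ j = a k}"

definition regions :: "(nat \<Rightarrow> real) \<Rightarrow> nat \<Rightarrow> (real ^ 'n) set set" where
  "regions a m = components (UNIV - arr_union a m)"

definition is_assoc_perm :: "real ^ ('n::{finite,linorder}) \<Rightarrow> ('n \<Rightarrow> 'n) \<Rightarrow> bool" where
  "is_assoc_perm x \<pi> \<longleftrightarrow> \<pi> permutes UNIV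
     \<and> (\<forall>p q. p \<le> q \<longrightarrow> x $ (\<pi> q) \<le> x $ (\<pi> p))
     \<and> (\<forall>i j. i < j \<and> x $ i = x $ j \<longrightarrow> inv \<pi> i < inv \<pi> j)"

definition assoc_perm :: "real ^ ('n::{finite,linorder}) \<Rightarrow> ('n \<Rightarrow> 'n)" where
  "assoc_perm x = (THE \<pi>. is_assoc_perm x \<pi>)"

definition Mk :: "(nat \<Rightarrow> real) \<Rightarrow> nat \<Rightarrow> real ^ ('n::{finite,linorder}) \<Rightarrow> real ^ ('n::{finite,linorder}) ^ ('n::{finite,linorder})" where
  "Mk a k x = (let \<pi> = assoc_perm x in
      (\<chi> i j. sgn (x $ (\<pi> i) - x $ (\<pi> j) - a k)))"

end

theory Submission
  imports Defs
begin

text \<open>For z in a region, let \<pi> be its associated permutation, so that z \<circ> \<pi> lists the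
coordinates in decreasing order. The entry sgn (z (\<pi> p) - z (\<pi> q) - a k) never vanishes, and
whether the p-th largest coordinate exceeds the q-th largest by more than a k is decided by the
existence of p coordinates exceeding n - q + 1 other coordinates by more than a k. That is a
statement about the sign of the differences z i - z j - a k alone, which cannot change inside
a connected region of the arrangement.\<close>

definition rank_by :: "('n::finite \<Rightarrow> 'b::linorder) \<Rightarrow> 'n \<Rightarrow> nat" where
  "rank_by f i = card {l. f l < f i}"

lemma rank_by_less:
  assumes "f i < f j"
  shows "rank_by f i < rank_by f j"
  unfolding rank_by_def
proof (rule psubset_card_mono)
  show "{l. f l < f i} \<subset> {l. f l < f j}"
    using assms by (auto intro: less_trans)
qed simp

lemma rank_by_less_iff: "rank_by f i < rank_by f j \<longleftrightarrow> f i < f j"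
proof
  show "f i < f j" if "rank_by f i < rank_by f j"
  proof (rule ccontr)
    assume "\<not> f i < f j"
    then consider "f i = f j" | "f j < f i" by fastforce
    then show False
      using that rank_by_less[of f j i] by cases (auto simp: rank_by_def)
  qed
qed (rule rank_by_less)

lemma inj_rank_by:
  assumes "inj f"
  shows "inj (rank_by f)"
proof (rule injI)
  fix i j assume "rank_by f i = rank_by f j"
  then have "f i = f j" using rank_by_less_iff[of f i j] rank_by_less_iff[of f j i]
    by (metis less_irrefl neq_iff)
  then show "i = j" by (rule injD[OF assms])
qed

lemma rank_by_bij:
  fixes f :: "'n::finite \<Rightarrow> 'b::linorder"
  assumes "inj f"
  shows "bij_betw (rank_by f) UNIV {..<CARD('n)}"
proof -
  have "rank_by f i < CARD('n)" for i
    unfolding rank_by_def by (rule psubset_card_mono) auto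
  then have "rank_by f ` UNIV = {..<CARD('n)}"
    using inj_rank_by[OF assms]
    by (intro card_subset_eq) (auto simp: card_image)
  with inj_rank_by[OF assms] show ?thesis by (simp add: bij_betw_def)
qed

lemma rank_by_sorting_perm:
  fixes f :: "'n::{finite,linorder} \<Rightarrow> 'b::linorder"
  assumes "\<sigma> permutes UNIV" "strict_mono (f \<circ> \<sigma>)"
  shows "rank_by f (\<sigma> p) = rank_by id p"
proof -
  have "{j. f j < f (\<sigma> p)} = \<sigma> ` {q. q < p}"
  proof -
    have "{j. f j < f (\<sigma> p)} = \<sigma> ` {q. f (\<sigma> q) < f (\<sigma> p)}"
      using permutes_surj[OF assms(1)] by (auto simp: surj_def)
    also have "{q. f (\<sigma> q) < f (\<sigma> p)} = {q. q < p}"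
      using strict_mono_less[OF assms(2)] by simp
    finally show ?thesis .
  qed
  then show ?thesis
    using permutes_inj[OF assms(1)] by (simp add: rank_by_def card_image inj_on_subset)
qed

lemma sorting_perm_unique:
  fixes f :: "'n::{finite,linorder} \<Rightarrow> 'b::linorder"
  assumes "inj f"
    and "\<sigma> permutes UNIV" "strict_mono (f \<circ> \<sigma>)"
    and "\<tau> permutes UNIV" "strict_mono (f \<circ> \<tau>)"
  shows "\<sigma> = \<tau>"
proof
  fix p
  have "rank_by f (\<sigma> p) = rank_by f (\<tau> p)"
    using rank_by_sorting_perm assms by metis
  then show "\<sigma> p = \<tau> p" by (rule injD[OF inj_rank_by[OF assms(1)]])
qed

lemma sorting_perm_exists:
  fixes f :: "'n::{finite,linorder} \<Rightarrow> 'b::linorder"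
  assumes "inj f"
  shows "\<exists>\<sigma>. \<sigma> permutes UNIV \<and> strict_mono (f \<circ> \<sigma>)"
proof -
  define \<sigma> where "\<sigma> = inv (rank_by f) \<circ> rank_by (id :: 'n \<Rightarrow> 'n)"
  have bij_id: "bij_betw (rank_by (id :: 'n \<Rightarrow> 'n)) UNIV {..<CARD('n)}"
    using rank_by_bij[of "id :: 'n \<Rightarrow> 'n"] by simp
  have bij_f: "bij_betw (rank_by f) UNIV {..<CARD('n)}" using assms by (rule rank_by_bij)
  have "bij_betw \<sigma> UNIV UNIV"
    unfolding \<sigma>_def using bij_id bij_betw_inv_into[OF bij_f] by (rule bij_betw_trans)
  then have perm: "\<sigma> permutes UNIV" by (rule bij_imp_permutes) simp
  have rank_\<sigma>: "rank_by f (\<sigma> p) = rank_by id p" for p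
    unfolding \<sigma>_def using bij_betw_apply[OF bij_id] bij_f
    by (simp add: bij_betw_inv_into_right)
  have "strict_mono (f \<circ> \<sigma>)"
  proof (rule strict_monoI)
    fix p q :: 'n assume "p < q"
    then have "rank_by f (\<sigma> p) < rank_by f (\<sigma> q)"
      unfolding rank_\<sigma> by (simp add: rank_by_less)
    then show "(f \<circ> \<sigma>) p < (f \<circ> \<sigma>) q" by (simp add: rank_by_less_iff)
  qed
  with perm show ?thesis by blast
qed

lemma ex1_sorting_perm:
  fixes f :: "'n::{finite,linorder} \<Rightarrow> 'b::linorder"
  assumes "inj f"
  shows "\<exists>!\<sigma>. \<sigma> permutes UNIV \<and> strict_mono (f \<circ> \<sigma>)"
  using sorting_perm_exists[OF assms] sorting_perm_unique[OF assms] by blast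

text \<open>HOL-Analysis already orders pairs componentwise, so the lexicographic order gets its own type.\<close>

datatype ('a, 'b) lex = Lex 'a 'b

instantiation lex :: (linorder, linorder) linorder
begin

fun less_eq_lex :: "('a, 'b) lex \<Rightarrow> ('a, 'b) lex \<Rightarrow> bool" where
  "Lex a b \<le> Lex c d \<longleftrightarrow> a < c \<or> a = c \<and> b \<le> d"

fun less_lex :: "('a, 'b) lex \<Rightarrow> ('a, 'b) lex \<Rightarrow> bool" where
  "Lex a b < Lex c d \<longleftrightarrow> a < c \<or> a = c \<and> b < d"

instance
proof
  fix x y z :: "('a, 'b) lex"
  show "x < y \<longleftrightarrow> x \<le> y \<and> \<not> y \<le> x" by (cases x; cases y) auto
  show "x \<le> x" by (cases x) auto
  show "x \<le> y \<Longrightarrow> y \<le> z \<Longrightarrow> x \<le> z" by (cases x; cases y; cases z) auto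
  show "x \<le> y \<Longrightarrow> y \<le> x \<Longrightarrow> x = y" by (cases x; cases y) auto
  show "x \<le> y \<or> y \<le> x" by (cases x; cases y) auto
qed

end

text \<open>Ties between equal coordinates are broken by the index, so the associated permutation is
the sorting permutation of this injective key.\<close>

definition assoc_key :: "real ^ 'n \<Rightarrow> 'n \<Rightarrow> (real, 'n) lex" where
  "assoc_key x i = Lex (- x $ i) i"

lemma inj_assoc_key: "inj (assoc_key x)"
  by (rule injI) (simp add: assoc_key_def)

lemma is_assoc_perm_iff_sorting_perm:
  fixes x :: "real ^ ('n::{finite,linorder})"
  shows "is_assoc_perm x \<pi> \<longleftrightarrow> \<pi> permutes UNIV \<and> strict_mono (assoc_key x \<circ> \<pi>)"
proof (cases "\<pi> permutes UNIV")
  case True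
  then have inj: "inj \<pi>" and inv_inv: "\<And>i. inv \<pi> (\<pi> i) = i" "\<And>i. \<pi> (inv \<pi> i) = i"
    by (simp_all add: permutes_inj permutes_inverses)
  have key_less: "assoc_key x i < assoc_key x j \<longleftrightarrow> x $ j < x $ i \<or> x $ i = x $ j \<and> i < j" for i j
    by (auto simp: assoc_key_def)
  have "(\<forall>p q. p \<le> q \<longrightarrow> x $ \<pi> q \<le> x $ \<pi> p) \<and> (\<forall>i j. i < j \<and> x $ i = x $ j \<longrightarrow> inv \<pi> i < inv \<pi> j)
     \<longleftrightarrow> (\<forall>p q. p < q \<longrightarrow> assoc_key x (\<pi> p) < assoc_key x (\<pi> q))" (is "?anti \<and> ?tie \<longleftrightarrow> ?mono")
  proof
    assume "?anti \<and> ?tie"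
    then have anti: "?anti" and tie: "?tie" by blast+
    show ?mono
    proof (intro allI impI)
      fix p q :: 'n assume "p < q"
      then have "\<pi> p \<noteq> \<pi> q" and "x $ \<pi> q \<le> x $ \<pi> p"
        using inj anti by (auto dest: injD)
      moreover have "\<not> \<pi> q < \<pi> p" if "x $ \<pi> p = x $ \<pi> q"
        using tie \<open>p < q\<close> that by (metis inv_inv(1) not_less_iff_gr_or_eq)
      ultimately show "assoc_key x (\<pi> p) < assoc_key x (\<pi> q)"
        unfolding key_less by fastforce
    qed
  next
    assume mono: ?mono
    have ?anti
      using mono unfolding key_less by (metis order.order_iff_strict)
    moreover have ?tie
      using mono unfolding key_less by (metis inv_inv(2) not_less_iff_gr_or_eq)
    ultimately show "?anti \<and> ?tie" ..
  qed
  with True show ?thesis by (simp add: is_assoc_perm_def strict_mono_def)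
qed (simp add: is_assoc_perm_def)

lemma
  fixes x :: "real ^ ('n::{finite,linorder})"
  shows assoc_perm_permutes: "assoc_perm x permutes UNIV"
    and assoc_perm_antimono: "antimono (\<lambda>p. x $ assoc_perm x p)"
proof -
  have "\<exists>!\<pi>. is_assoc_perm x \<pi>"
    unfolding is_assoc_perm_iff_sorting_perm by (rule ex1_sorting_perm[OF inj_assoc_key])
  then have "is_assoc_perm x (assoc_perm x)"
    unfolding assoc_perm_def by (rule theI')
  then show "assoc_perm x permutes UNIV" "antimono (\<lambda>p. x $ assoc_perm x p)"
    by (auto simp: is_assoc_perm_def intro: antimonoI)
qed

text \<open>In a decreasing enumeration of the values of f, the entry in position p exceeds the entry
in position q by more than c; phrased without reference to the enumeration.\<close>

definition sorted_gap_gt :: "('n::{finite,linorder} \<Rightarrow> 'a::linordered_ab_group_add) \<Rightarrow> 'a \<Rightarrow> 'n \<Rightarrow> 'n \<Rightarrow> bool" where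
  "sorted_gap_gt f c p q \<longleftrightarrow>
     (\<exists>T B. card T = card {..p} \<and> card B = card {q..} \<and> (\<forall>t\<in>T. \<forall>b\<in>B. c < f t - f b))"

lemma card_less_imp_ex_notin:
  assumes "inj_on g T" "finite S" "card S < card T"
  shows "\<exists>t\<in>T. g t \<notin> S"
  using card_inj_on_le[OF assms(1) _ assms(2)] assms(3) by fastforce

lemma sorted_gap_gt_iff:
  fixes f :: "'n::{finite,linorder} \<Rightarrow> 'a::linordered_ab_group_add"
  assumes perm: "\<pi> permutes UNIV" and anti: "antimono (f \<circ> \<pi>)"
  shows "sorted_gap_gt f c p q \<longleftrightarrow> c < f (\<pi> p) - f (\<pi> q)"
proof
  assume gap: "c < f (\<pi> p) - f (\<pi> q)"
  have "c < f t - f b" if "t \<in> \<pi> ` {..p}" "b \<in> \<pi> ` {q..}" for t b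
  proof -
    have "f (\<pi> p) \<le> f t" "f b \<le> f (\<pi> q)"
      using that antimonoD[OF anti] by fastforce+
    then have "f (\<pi> p) - f (\<pi> q) \<le> f t - f b" by (rule diff_mono)
    with gap show ?thesis by (rule order_less_le_trans)
  qed
  moreover have "card (\<pi> ` {..p}) = card {..p}" "card (\<pi> ` {q..}) = card {q..}"
    using permutes_inj[OF perm] by (simp_all add: card_image inj_on_subset)
  ultimately show "sorted_gap_gt f c p q"
    unfolding sorted_gap_gt_def by blast
next
  assume "sorted_gap_gt f c p q"
  then obtain T B where T: "card T = card {..p}" and B: "card B = card {q..}"
    and TB: "\<forall>t\<in>T. \<forall>b\<in>B. c < f t - f b"
    unfolding sorted_gap_gt_def by blast
  have inj: "inj_on (inv \<pi>) X" for X
    using permutes_inj[OF permutes_inv[OF perm]] by (rule inj_on_subset) simp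
  have "card {..<p} < card {..p}" "card {q<..} < card {q..}"
    by (auto intro!: psubset_card_mono)
  then obtain t b where "t \<in> T" "\<not> inv \<pi> t < p" "b \<in> B" "\<not> q < inv \<pi> b"
    using card_less_imp_ex_notin[OF inj, of "{..<p}" T] card_less_imp_ex_notin[OF inj, of "{q<..}" B] T B
    by auto
  moreover have "f t \<le> f (\<pi> p)" "f (\<pi> q) \<le> f b"
    using calculation antimonoD[OF anti, of p "inv \<pi> t"] antimonoD[OF anti, of "inv \<pi> b" q]
    by (simp_all add: not_less permutes_inverses(1)[OF perm])
  ultimately show "c < f (\<pi> p) - f (\<pi> q)"
    using TB by (smt (verit) diff_mono order_less_le_trans)
qed

lemma region_avoids_hyperplane:
  assumes "\<Omega> \<in> regions a m" "z \<in> \<Omega>" "i \<noteq> j" "k \<in> {1..m}"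
  shows "z $ i - z $ j \<noteq> a k"
  using in_components_subset[OF assms(1)[unfolded regions_def]] assms(2-4)
  by (auto simp: arr_union_def)

lemma region_diff_gt_iff:
  fixes x y :: "real ^ 'n"
  assumes reg: "\<Omega> \<in> regions a m" and k: "k \<in> {1..m}" and x: "x \<in> \<Omega>" and y: "y \<in> \<Omega>"
  shows "a k < x $ i - x $ j \<longleftrightarrow> a k < y $ i - y $ j"
proof (rule ccontr)
  assume differ: "\<not> ?thesis"
  define w :: "real ^ 'n" where "w = axis i 1 - axis j 1"
  have inner_w: "inner w z = z $ i - z $ j" for z
    by (simp add: w_def inner_diff_left inner_axis')
  have "i \<noteq> j" using differ by auto
  have "connected \<Omega>"
    using reg unfolding regions_def by (rule in_components_connected)
  moreover have "inner w x \<le> a k \<and> a k \<le> inner w y \<or> inner w y \<le> a k \<and> a k \<le> inner w x"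
    using differ unfolding inner_w by linarith
  ultimately obtain z where "z \<in> \<Omega>" "z $ i - z $ j = a k"
    using connected_ivt_hyperplane[of \<Omega> x y w "a k"] connected_ivt_hyperplane[of \<Omega> y x w "a k"] x y
    unfolding inner_w by blast
  then show False
    using region_avoids_hyperplane[OF reg _ \<open>i \<noteq> j\<close> k] by blast
qed

lemma Mk_entry_region:
  fixes z :: "real ^ ('n::{finite,linorder})"
  assumes reg: "\<Omega> \<in> regions a m" and k: "k \<in> {1..m}" and "0 < a k" and z: "z \<in> \<Omega>"
  shows "Mk a k z $ p $ q = (if sorted_gap_gt (($) z) (a k) p q then 1 else -1)"
proof -
  define \<pi> where "\<pi> = assoc_perm z"
  have perm: "\<pi> permutes UNIV"
    unfolding \<pi>_def by (rule assoc_perm_permutes)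
  have "z $ \<pi> p - z $ \<pi> q \<noteq> a k"
  proof (cases "p = q")
    case False
    then have "\<pi> p \<noteq> \<pi> q" using permutes_inj[OF perm] by (auto dest: injD)
    then show ?thesis by (rule region_avoids_hyperplane[OF reg z _ k])
  qed (use \<open>0 < a k\<close> in simp)
  moreover have "sorted_gap_gt (($) z) (a k) p q \<longleftrightarrow> a k < z $ \<pi> p - z $ \<pi> q"
    using sorted_gap_gt_iff[OF perm] assoc_perm_antimono[of z] by (simp add: \<pi>_def comp_def)
  ultimately show ?thesis
    by (auto simp: Mk_def \<pi>_def[symmetric] sgn_if)
qed

theorem proposition2p3:
  fixes a :: "nat \<Rightarrow> real" and m k :: nat
    and \<Omega> :: "(real ^ ('n::{finite,linorder})) set" and x y :: "real ^ ('n::{finite,linorder})"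
  assumes dec: "\<And>i j. 1 \<le> i \<Longrightarrow> i < j \<Longrightarrow> j \<le> m \<Longrightarrow> a j < a i"
    and pos: "\<And>i. 1 \<le> i \<Longrightarrow> i \<le> m \<Longrightarrow> 0 < a i"
    and reg: "\<Omega> \<in> regions a m"
    and k: "1 \<le> k" "k \<le> m"
    and x: "x \<in> \<Omega>" and y: "y \<in> \<Omega>"
  shows "Mk a k x = Mk a k y"
proof -
  have km: "k \<in> {1..m}" and ak: "0 < a k" using k pos by auto
  have "sorted_gap_gt (($) x) (a k) p q \<longleftrightarrow> sorted_gap_gt (($) y) (a k) p q" for p q
    unfolding sorted_gap_gt_def using region_diff_gt_iff[OF reg km x y] by simp
  then show ?thesis
    by (simp add: vec_eq_iff Mk_entry_region[OF reg km ak x] Mk_entry_region[OF reg km ak y])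
qed

end
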